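(* Let $(\mathcal{H},\langle\cdot,\cdot\rangle)$ be a real Hilbert space with induced norm $\|\cdot\|$. Let $f:\mathcal{H}\to\mathbb{R}$ be $\mu$-strongly convex and $L$-smooth with $0<\mu<L<+\infty$, and let $g:\mathcal{H}\to\mathbb{R}\cup\{+\infty\}$ be convex, proper and lower semicontinuous. Let $q=\mu/L$ and let $((x^k,y^k,z^k,A_k))_{k\in\mathbb{N}_0}$ be generated by the Prox-ITEM method (described in the context) from an arbitrary $x^0\in\mathcal{H}$. Let $x^\star$ be the unique minimizer of $f+g$ over $\mathcal{H}$. Then for every $k\in\mathbb{N}_0$, $$\|z^k-x^\star\|^2\le \frac{1}{1+qA_k}\,\|x^0-x^\star\|^2.$$
   Context: $f$ is $L$-smooth if it is Fréchet differentiable with $L$-Lipschitz gradient; $\mu$-strongly convex means $f-\frac{\mu}{2}\|\cdot\|^2$ is convex. For $\gamma>0$, $\operatorname{Prox}^{\gamma}_g(x)=\operatorname{argmin}_{z\in\mathcal{H}}\big(g(z)+\frac{1}{2\gamma}\|x-z\|^2\big)$. The Prox-ITEM method: set $q=\mu/L$, $A_0=0$, $z^0=x^0$, and for $k=0,1,2,\dots$: $A_{k+1}=\frac{(1+q)A_k+2\big(1+\sqrt{(1+A_k)(1+qA_k)}\big)}{(1-q)^2}$, $\beta_k=\frac{A_k}{(1-q)A_{k+1}}$, $\delta_k=\sqrt{\frac{A_{k+1}}{1+qA_{k+1}}}$, $y^k=(1-\beta_k)z^k+\beta_k x^k$, $\bar z^{k+1}=(1-q\delta_k)z^k+q\delta_k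 y^k-\frac{\delta_k}{L}\nabla f(y^k)$, $z^{k+1}=\operatorname{Prox}^{\delta_k/L}_g(\bar z^{k+1})$, $x^{k+1}=y^k-\frac1L\nabla f(y^k)-\frac{1}{\delta_k}(\bar z^{k+1}-z^{k+1})$. *)

theory Defs
  imports "HOL-Analysis.Analysis" "HOL-Library.Extended_Real"
begin

definition ereal_convex :: "('a::real_vector \<Rightarrow> ereal) \<Rightarrow> bool" where
  "ereal_convex g \<longleftrightarrow>
     (\<forall>x y. \<forall>t::real. 0 < t \<and> t < 1 \<longrightarrow>
        g ((1 - t) *\<^sub>R x + t *\<^sub>R y) \<le> ereal (1 - t) * g x + ereal t * g y)"

definition ereal_proper :: "('a \<Rightarrow> ereal) \<Rightarrow> bool" where
  "ereal_proper g \<longleftrightarrow> (\<forall>x. g x \<noteq> -\<infinity>) \<and> (\<exists>x. g x \<noteq> \<infinity>)"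

definition ereal_lsc :: "('a::topological_space \<Rightarrow> ereal) \<Rightarrow> bool" where
  "ereal_lsc g \<longleftrightarrow> (\<forall>c::real. closed {x. g x \<le> ereal c})"

definition prox :: "real \<Rightarrow> ('a::real_normed_vector \<Rightarrow> ereal) \<Rightarrow> 'a \<Rightarrow> 'a" where
  "prox \<gamma> g x = (SOME z. \<forall>w. g z + ereal (norm (x - z)^2 / (2 * \<gamma>))
                                \<le> g w + ereal (norm (x - w)^2 / (2 * \<gamma>)))"

fun itemA :: "real \<Rightarrow> nat \<Rightarrow> real" where
  "itemA q 0 = 0"
| "itemA q (Suc k) =
     ((1 + q) * itemA q k + 2 * (1 + sqrt ((1 + itemA q k) * (1 + q * itemA q k)))) / (1 - q)^2"

definition itemBeta :: "real \<Rightarrow> nat \<Rightarrow> real" where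
  "itemBeta q k = itemA q k / ((1 - q) * itemA q (Suc k))"

definition itemDelta :: "real \<Rightarrow> nat \<Rightarrow> real" where
  "itemDelta q k = sqrt (itemA q (Suc k) / (1 + q * itemA q (Suc k)))"

fun proxitem :: "real \<Rightarrow> real \<Rightarrow> ('a::real_normed_vector \<Rightarrow> 'a) \<Rightarrow> ('a \<Rightarrow> ereal) \<Rightarrow> 'a
                  \<Rightarrow> nat \<Rightarrow> 'a \<times> 'a" where
  "proxitem \<mu> L df g x0 0 = (x0, x0)"
| "proxitem \<mu> L df g x0 (Suc k) =
     (let q = \<mu> / L; (x, z) = proxitem \<mu> L df g x0 k;
          \<beta> = itemBeta q k; \<delta> = itemDelta q k;
          y = (1 - \<beta>) *\<^sub>R z + \<beta> *\<^sub>R x;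
          zb = (1 - q * \<delta>) *\<^sub>R z + (q * \<delta>) *\<^sub>R y - (\<delta> / L) *\<^sub>R df y;
          z' = prox (\<delta> / L) g zb;
          x' = y - (1 / L) *\<^sub>R df y - (1 / \<delta>) *\<^sub>R (zb - z')
      in (x', z'))"

end

theory Submission
  imports Defs
begin

(* Divide f by L and shift it so that x* becomes a minimiser with zero gradient of the smooth part:
   F w = (f w - f x* - <grad f x*, w - x*>) / L is q-strongly convex and 1-smooth.  Along Prox-ITEM
   the quantity
     phi_k = (1 + q A_k) |z_k - x*|^2 + (1 - q) A_k gap_k + a_k <v_k, z_k - x*> - b_k G z_k
             + A_k/2 |v_k|^2
   is nonincreasing, where gap_k >= 0 is the slack of the interpolation inequality of F between
   y_(k-1) and x*, v_k is the subgradient of the normalised g produced by the k-th proximal step,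
   and a_k >= b_k >= 0 are explicit weights.  Indeed phi_k - phi_(k+1) is a nonnegative combination
   of two interpolation inequalities of F (between y_k and x*, and between y_(k-1) and y_k), the
   subgradient inequality of g at z_k, and two squares; this identity is exactly where the
   recursions for A_k, beta_k and delta_k enter.  Since phi_0 = |x_0 - x*|^2 and every term of phi_k
   but the first is nonnegative, the bound follows.  The proximal steps are well defined because
   g + |x - .|^2 / (2 gamma) is lower semicontinuous and uniformly convex on a complete space, so its
   minimising sequences converge. *)

section \<open>Smooth strongly convex functions\<close>

lemma le_of_le_add_scaled:
  fixes a b C :: real
  assumes "\<And>t. 0 < t \<Longrightarrow> t < 1 \<Longrightarrow> a \<le> b + t * C"
  shows "a \<le> b"
proof (rule tendsto_le[OF trivial_limit_at_right_real])
  show "((\<lambda>t. b + t * C) \<longlongrightarrow> b) (at_right 0)"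
    by (auto intro!: tendsto_eq_intros)
  show "((\<lambda>t. a) \<longlongrightarrow> a) (at_right 0)" by simp
  show "\<forall>\<^sub>F t in at_right 0. a \<le> b + t * C"
    using eventually_at_right_real[OF zero_less_one] by eventually_elim (auto intro: assms)
qed

lemma has_real_derivative_along_line:
  assumes "\<And>x. (f has_derivative (\<lambda>h. inner (df x) h)) (at x)"
  shows "((\<lambda>t. f (x + t *\<^sub>R d)) has_real_derivative inner (df (x + t *\<^sub>R d)) d) (at t)"
proof -
  have "((\<lambda>t. x + t *\<^sub>R d) has_derivative (\<lambda>h. h *\<^sub>R d)) (at t)"
    by (auto intro!: derivative_eq_intros)
  from has_derivative_compose[OF this assms]
  show ?thesis by (auto intro: has_derivative_imp_has_field_derivative)
qed

lemma lipschitz_gradient_quadratic_bounds: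
  fixes f :: "'a::real_inner \<Rightarrow> real"
  assumes grad: "\<And>x. (f has_derivative (\<lambda>h. inner (df x) h)) (at x)"
    and lip: "L-lipschitz_on UNIV df"
  shows "f y \<le> f x + inner (df x) (y - x) + L/2 * (norm (y - x))^2"
    and "f x + inner (df x) (y - x) - L/2 * (norm (y - x))^2 \<le> f y"
proof -
  define d where "d = y - x"
  define c where "c = inner (df x) d"
  have slope: "\<bar>inner (df (x + t *\<^sub>R d)) d - c\<bar> \<le> t * (L * (norm d)^2)" if "0 \<le> t" for t
  proof -
    have "\<bar>inner (df (x + t *\<^sub>R d)) d - c\<bar> = \<bar>inner (df (x + t *\<^sub>R d) - df x) d\<bar>"
      by (simp add: c_def inner_diff_left)
    also have "\<dots> \<le> norm (df (x + t *\<^sub>R d) - df x) * norm d"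
      by (rule Cauchy_Schwarz_ineq2)
    also have "\<dots> \<le> L * norm (t *\<^sub>R d) * norm d"
      using lipschitz_onD[OF lip, of "x + t *\<^sub>R d" x] by (simp add: dist_norm mult_right_mono)
    finally show ?thesis
      using that by (simp add: power2_eq_square mult_ac)
  qed
  define \<phi>\<^sub>1 where "\<phi>\<^sub>1 t = f (x + t *\<^sub>R d) - t * c - L/2 * t^2 * (norm d)^2" for t
  have "\<phi>\<^sub>1 1 \<le> \<phi>\<^sub>1 0"
  proof (rule DERIV_nonpos_imp_nonincreasing[of 0 1])
    fix t :: real assume "0 \<le> t" "t \<le> 1"
    then show "\<exists>D. (\<phi>\<^sub>1 has_real_derivative D) (at t) \<and> D \<le> 0"
      unfolding \<phi>\<^sub>1_def using slope[of t]
      by (auto intro!: derivative_eq_intros has_real_derivative_along_line[OF grad])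
  qed simp
  then show "f y \<le> f x + inner (df x) (y - x) + L/2 * (norm (y - x))^2"
    by (simp add: \<phi>\<^sub>1_def d_def c_def)
  define \<phi>\<^sub>2 where "\<phi>\<^sub>2 t = f (x + t *\<^sub>R d) - t * c + L/2 * t^2 * (norm d)^2" for t
  have "\<phi>\<^sub>2 0 \<le> \<phi>\<^sub>2 1"
  proof (rule DERIV_nonneg_imp_nondecreasing[of 0 1])
    fix t :: real assume "0 \<le> t" "t \<le> 1"
    then show "\<exists>D. (\<phi>\<^sub>2 has_real_derivative D) (at t) \<and> 0 \<le> D"
      unfolding \<phi>\<^sub>2_def using slope[of t]
      by (auto intro!: derivative_eq_intros has_real_derivative_along_line[OF grad])
  qed simp
  then show "f x + inner (df x) (y - x) - L/2 * (norm (y - x))^2 \<le> f y"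
    by (simp add: \<phi>\<^sub>2_def d_def c_def)
qed

lemma convex_on_gradient_inequality:
  fixes h :: "'a::real_inner \<Rightarrow> real"
  assumes conv: "convex_on UNIV h"
    and grad: "\<And>x. (h has_derivative (\<lambda>u. inner (dh x) u)) (at x)"
  shows "h x + inner (dh x) (y - x) \<le> h y"
proof -
  define \<phi> where "\<phi> t = h (x + t *\<^sub>R (y - x))" for t
  have "convex_on UNIV \<phi>"
  proof (rule convex_onI)
    fix t a b :: real assume t: "0 < t" "t < 1"
    have "x + ((1 - t) *\<^sub>R a + t *\<^sub>R b) *\<^sub>R (y - x)
        = (1 - t) *\<^sub>R (x + a *\<^sub>R (y - x)) + t *\<^sub>R (x + b *\<^sub>R (y - x))"
      by (simp add: algebra_simps)
    then show "\<phi> ((1 - t) *\<^sub>R a + t *\<^sub>R b) \<le> (1 - t) * \<phi> a + t * \<phi> b"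
      unfolding \<phi>_def using convex_onD[OF conv, of t] t by simp
  qed simp
  moreover have "(\<phi> has_real_derivative inner (dh x) (y - x)) (at 0)"
    using has_real_derivative_along_line[OF grad, of x "y - x" 0] by (simp add: \<phi>_def[abs_def])
  ultimately have "inner (dh x) (y - x) * (1 - 0) \<le> \<phi> 1 - \<phi> 0"
    by (intro convex_on_imp_above_tangent) auto
  then show ?thesis by (simp add: \<phi>_def)
qed

lemma convex_smooth_interpolation:
  fixes h :: "'a::real_inner \<Rightarrow> real"
  assumes tangent: "\<And>x y. h x + inner (dh x) (y - x) \<le> h y"
    and upper: "\<And>x y. h y \<le> h x + inner (dh x) (y - x) + K/2 * (norm (y - x))^2"
    and "0 < K"
  shows "h b + inner (dh b) (a - b) + (norm (dh a - dh b))^2 / (2*K) \<le> h a"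
proof -
  define u where "u = dh a - dh b"
  define w where "w = a - (1/K) *\<^sub>R u"
  have "h b + inner (dh b) (w - b) \<le> h a + inner (dh a) (w - a) + K/2 * (norm (w - a))^2"
    using tangent[of b w] upper[where x = a and y = w] by linarith
  moreover have "inner (dh a) (w - a) - inner (dh b) (w - b) = - inner (dh b) (a - b) - inner u u / K"
    by (simp add: w_def u_def algebra_simps add_divide_distrib diff_divide_distrib)
  moreover have "K/2 * (norm (w - a))^2 = (norm u)^2 / (2*K)"
    using \<open>0 < K\<close> by (simp add: w_def power2_eq_square)
  ultimately show ?thesis
    unfolding u_def[symmetric] power2_norm_eq_inner by (simp add: field_simps)
qed

text \<open>Slack of the interpolation inequality of the class of \<mu>-strongly convex L-smooth functions
  between triples (point, value, gradient).\<close>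

fun interpolation_gap :: "real \<Rightarrow> real \<Rightarrow> 'a::real_inner \<times> real \<times> 'a \<Rightarrow> 'a \<times> real \<times> 'a \<Rightarrow> real" where
  "interpolation_gap \<mu> L (a, fa, ga) (b, fb, gb) =
     fa - fb - inner gb (a - b) - \<mu>/2 * (norm (a - b))^2 - (norm (ga - gb - \<mu> *\<^sub>R (a - b)))^2 / (2*(L - \<mu>))"

lemma interpolation_gap_nonneg:
  fixes f :: "'a::real_inner \<Rightarrow> real"
  assumes grad: "\<And>x. (f has_derivative (\<lambda>h. inner (df x) h)) (at x)"
    and lip: "L-lipschitz_on UNIV df"
    and conv: "convex_on UNIV (\<lambda>x. f x - \<mu>/2 * (norm x)^2)"
    and "\<mu> < L"
  shows "0 \<le> interpolation_gap \<mu> L (a, f a, df a) (b, f b, df b)"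
proof -
  define h where "h x = f x - \<mu>/2 * (norm x)^2" for x
  define dh where "dh x = df x - \<mu> *\<^sub>R x" for x
  have "(h has_derivative (\<lambda>u. inner (dh x) u)) (at x)" for x
    unfolding h_def dh_def power2_norm_eq_inner
    by (auto intro!: derivative_eq_intros grad simp: fun_eq_iff inner_diff_right inner_commute)
  with conv have tangent: "h x + inner (dh x) (y - x) \<le> h y" for x y
    by (intro convex_on_gradient_inequality) (auto simp: h_def[abs_def])
  have curvature: "h y - h x - inner (dh x) (y - x) = f y - f x - inner (df x) (y - x) - \<mu>/2 * (norm (y - x))^2"
    for x y
    by (simp add: h_def dh_def power2_norm_eq_inner inner_commute algebra_simps)
  have upper: "h y \<le> h x + inner (dh x) (y - x) + (L - \<mu>)/2 * (norm (y - x))^2" for x y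
    using lipschitz_gradient_quadratic_bounds(1)[OF grad lip, of y x] curvature[where x = x and y = y]
    by (simp add: algebra_simps diff_divide_distrib)
  have "h b + inner (dh b) (a - b) + (norm (dh a - dh b))^2 / (2*(L - \<mu>)) \<le> h a"
    using convex_smooth_interpolation[OF tangent upper] \<open>\<mu> < L\<close> by simp
  moreover have "dh a - dh b = df a - df b - \<mu> *\<^sub>R (a - b)"
    by (simp add: dh_def algebra_simps)
  ultimately show ?thesis
    using curvature[where x = b and y = a] by simp
qed

section \<open>Convex extended-real functions and the proximal map\<close>

lemma ereal_convex_le_combination:
  assumes "ereal_convex g" "g a = ereal \<alpha>" "g b = ereal \<beta>" "0 < t" "t < 1"
  shows "g ((1 - t) *\<^sub>R a + t *\<^sub>R b) \<le> ereal ((1 - t) * \<alpha> + t * \<beta>)"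
proof -
  have "g ((1 - t) *\<^sub>R a + t *\<^sub>R b) \<le> ereal (1 - t) * g a + ereal t * g b"
    using assms unfolding ereal_convex_def by blast
  with assms show ?thesis by simp
qed

lemma composite_minimizer_subgradient:
  fixes g :: "'a::real_inner \<Rightarrow> ereal" and h :: "'a \<Rightarrow> real"
  assumes conv: "ereal_convex g"
    and min: "\<And>w. ereal (h z) + g z \<le> ereal (h w) + g w"
    and gz: "g z = ereal c"
    and upper: "\<And>w. h w \<le> h z + inner p (w - z) + K * (norm (w - z))^2"
  shows "ereal (c - inner p (w - z)) \<le> g w"
proof (cases "g w")
  case (real \<gamma>)
  have "c \<le> inner p (w - z) + \<gamma> + t * (K * (norm (w - z))^2)" if t: "0 < t" "t < 1" for t
  proof -
    define w\<^sub>t where "w\<^sub>t = (1 - t) *\<^sub>R z + t *\<^sub>R w"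
    have "w\<^sub>t - z = t *\<^sub>R (w - z)"
      by (simp add: w\<^sub>t_def algebra_simps)
    then have upper\<^sub>t: "h w\<^sub>t \<le> h z + t * inner p (w - z) + t^2 * (K * (norm (w - z))^2)"
      using upper[of w\<^sub>t] by (simp add: power_mult_distrib mult_ac)
    have "ereal (h z + c) \<le> ereal (h w\<^sub>t) + g w\<^sub>t"
      using min[of w\<^sub>t] gz by simp
    also have "\<dots> \<le> ereal (h w\<^sub>t) + ereal ((1 - t) * c + t * \<gamma>)"
      unfolding w\<^sub>t_def by (intro add_left_mono ereal_convex_le_combination[OF conv gz real t])
    finally have "h z + c \<le> h w\<^sub>t + ((1 - t) * c + t * \<gamma>)"
      by simp
    with upper\<^sub>t have "t * c \<le> t * (inner p (w - z) + \<gamma> + t * (K * (norm (w - z))^2))"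
      by (simp add: power2_eq_square algebra_simps)
    with t show ?thesis by simp
  qed
  then have "c \<le> inner p (w - z) + \<gamma>"
    by (rule le_of_le_add_scaled)
  with real show ?thesis by simp
next
  case MInf
  with min[of w] gz show ?thesis by simp
qed simp

lemma ereal_lsc_eventually_le:
  assumes "ereal_lsc \<phi>" and "w \<longlonglongrightarrow> z" and "\<forall>\<^sub>F n in sequentially. \<phi> (w n) \<le> ereal c"
  shows "\<phi> z \<le> ereal c"
proof -
  have "z \<in> {x. \<phi> x \<le> ereal c}"
    using assms unfolding ereal_lsc_def
    by (intro Lim_in_closed_set[OF _ _ trivial_limit_sequentially]) auto
  then show ?thesis by simp
qed

lemma ereal_lsc_add_continuous:
  fixes g :: "'a::metric_space \<Rightarrow> ereal"
  assumes lsc: "ereal_lsc g" and cont: "continuous_on UNIV h"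
  shows "ereal_lsc (\<lambda>w. g w + ereal (h w))"
  unfolding ereal_lsc_def
proof (intro allI closed_sequential_limits[THEN iffD2] impI allI; elim conjE)
  fix c :: real and w :: "nat \<Rightarrow> 'a" and l
  assume below: "\<forall>n. w n \<in> {x. g x + ereal (h x) \<le> ereal c}" and lim: "w \<longlonglongrightarrow> l"
  have "g l \<le> ereal (c - h l) + ereal \<epsilon>" if "0 < \<epsilon>" for \<epsilon>
  proof -
    have "(\<lambda>n. h (w n)) \<longlonglongrightarrow> h l"
      using cont lim by (simp add: continuous_on_sequentially o_def)
    then have "\<forall>\<^sub>F n in sequentially. h l - \<epsilon> < h (w n)"
      using \<open>0 < \<epsilon>\<close> by (intro order_tendstoD) auto
    then have "\<forall>\<^sub>F n in sequentially. g (w n) \<le> ereal (c - h l + \<epsilon>)"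
    proof eventually_elim
      case (elim n)
      with below[rule_format, of n] show ?case
        by (cases "g (w n)") auto
    qed
    with lsc lim show ?thesis
      by (simp add: ereal_lsc_eventually_le)
  qed
  then have "g l \<le> ereal (c - h l)"
    by (rule ereal_le_epsilon2)
  then show "l \<in> {x. g x + ereal (h x) \<le> ereal c}"
    by (cases "g l") auto
qed

lemma Cauchy_if_norm_sq_le_inverse_Suc:
  fixes w :: "nat \<Rightarrow> 'a::real_normed_vector"
  assumes "0 < \<kappa>" and bound: "\<And>i j. \<kappa> * (norm (w i - w j))^2 \<le> 1 / real (Suc i) + 1 / real (Suc j)"
  shows "Cauchy w"
proof (rule CauchyI)
  fix e :: real assume "0 < e"
  then obtain N where "N > 0" and N: "inverse (real N) < \<kappa> * e^2 / 2"
    using ex_inverse_of_nat_less[of "\<kappa> * e^2 / 2"] \<open>0 < \<kappa>\<close> by auto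
  have "norm (w i - w j) < e" if "N \<le> i" "N \<le> j" for i j
  proof -
    have "1 / real (Suc i) \<le> inverse (real N)" "1 / real (Suc j) \<le> inverse (real N)"
      using that \<open>N > 0\<close> by (auto simp: inverse_eq_divide intro!: frac_le)
    then have "\<kappa> * (norm (w i - w j))^2 < \<kappa> * e^2"
      using bound[of i j] N by linarith
    then show ?thesis
      using \<open>0 < \<kappa>\<close> \<open>0 < e\<close> by (simp add: power_less_imp_less_base)
  qed
  then show "\<exists>N. \<forall>i\<ge>N. \<forall>j\<ge>N. norm (w i - w j) < e"
    by blast
qed

lemma ereal_lsc_uniformly_convex_has_minimizer:
  fixes \<phi> :: "'a::{real_normed_vector, complete_space} \<Rightarrow> ereal"
  assumes lsc: "ereal_lsc \<phi>"
    and bounded: "\<And>w. ereal M \<le> \<phi> w"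
    and finite: "\<phi> w\<^sub>0 \<noteq> \<infinity>"
    and midpoint: "\<And>a b \<alpha> \<beta>. \<phi> a = ereal \<alpha> \<Longrightarrow> \<phi> b = ereal \<beta> \<Longrightarrow>
                     \<phi> (midpoint a b) \<le> ereal ((\<alpha> + \<beta>)/2 - \<kappa> * (norm (a - b))^2)"
    and "0 < \<kappa>"
  shows "\<exists>z. \<forall>w. \<phi> z \<le> \<phi> w"
proof -
  define D where "D = {w. \<phi> w \<noteq> \<infinity>}"
  define \<psi> where "\<psi> w = real_of_ereal (\<phi> w)" for w
  have \<phi>_D: "\<phi> w = ereal (\<psi> w)" if "w \<in> D" for w
    using that bounded[of w] by (cases "\<phi> w") (auto simp: D_def \<psi>_def)
  have "M \<le> \<psi> w" if "w \<in> D" for w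
    using bounded[of w] \<phi>_D[OF that] by simp
  then have "bdd_below (\<psi> ` D)"
    by (rule bdd_belowI2)
  define m where "m = Inf (\<psi> ` D)"
  have m_le: "m \<le> \<psi> w" if "w \<in> D" for w
    unfolding m_def using \<open>bdd_below (\<psi> ` D)\<close> that by (simp add: cInf_lower)
  have "\<exists>w\<in>D. \<psi> w < m + 1 / real (Suc n)" for n
    using cInf_lessD[of "\<psi> ` D" "m + 1 / real (Suc n)"] finite by (auto simp: m_def D_def)
  then obtain w where wD: "\<And>n. w n \<in> D" and w_min: "\<And>n. \<psi> (w n) < m + 1 / real (Suc n)"
    by metis
  have spread: "\<kappa> * (norm (a - b))^2 \<le> (\<psi> a + \<psi> b)/2 - m" if "a \<in> D" "b \<in> D" for a b
  proof -
    have mid: "\<phi> (midpoint a b) \<le> ereal ((\<psi> a + \<psi> b)/2 - \<kappa> * (norm (a - b))^2)"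
      by (rule midpoint[OF \<phi>_D \<phi>_D]) (use that in auto)
    then have "midpoint a b \<in> D"
      by (auto simp: D_def)
    with mid have "\<psi> (midpoint a b) \<le> (\<psi> a + \<psi> b)/2 - \<kappa> * (norm (a - b))^2"
      using \<phi>_D by simp
    with m_le[OF \<open>midpoint a b \<in> D\<close>] show ?thesis
      by linarith
  qed
  have "\<kappa> * (norm (w i - w j))^2 \<le> 1 / real (Suc i) + 1 / real (Suc j)" for i j
  proof -
    have "0 \<le> 1 / real (Suc i)" "0 \<le> 1 / real (Suc j)"
      by simp_all
    with spread[OF wD wD, of i j] w_min[of i] w_min[of j] show ?thesis
      by argo
  qed
  then obtain z where lim: "w \<longlonglongrightarrow> z"
    using Cauchy_if_norm_sq_le_inverse_Suc[OF \<open>0 < \<kappa>\<close>] Cauchy_convergent_iff convergent_def by blast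
  have z_le: "\<phi> z \<le> ereal (m + \<epsilon>)" if "0 < \<epsilon>" for \<epsilon>
  proof (rule ereal_lsc_eventually_le[OF lsc lim])
    have "\<forall>\<^sub>F n in sequentially. 1 / real (Suc n) < \<epsilon>"
      using order_tendstoD(2)[OF LIMSEQ_inverse_real_of_nat \<open>0 < \<epsilon>\<close>] by (simp add: inverse_eq_divide)
    then show "\<forall>\<^sub>F n in sequentially. \<phi> (w n) \<le> ereal (m + \<epsilon>)"
    proof eventually_elim
      case (elim n)
      with w_min[of n] \<phi>_D[OF wD[of n]] show ?case
        by simp
    qed
  qed
  have "z \<in> D"
    using z_le[of 1] by (auto simp: D_def)
  have "\<psi> z \<le> m + \<epsilon>" if "0 < \<epsilon>" for \<epsilon>
    using z_le[OF that] \<phi>_D[OF \<open>z \<in> D\<close>] by simp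
  then have "\<psi> z \<le> m"
    by (rule field_le_epsilon)
  then have "\<phi> z \<le> \<phi> w" for w
  proof (cases "w \<in> D")
    case True
    with \<open>\<psi> z \<le> m\<close> m_le[OF True] show ?thesis
      using \<phi>_D[OF True] \<phi>_D[OF \<open>z \<in> D\<close>] by simp
  qed (simp add: D_def)
  then show ?thesis by blast
qed

lemma prox_subgradient:
  fixes g :: "'a::{real_inner, complete_space} \<Rightarrow> ereal"
  assumes conv: "ereal_convex g" and lsc: "ereal_lsc g" and dom: "g w\<^sub>0 \<noteq> \<infinity>"
    and minorant: "\<And>w. ereal (c + inner p w) \<le> g w" and "0 < \<gamma>"
  obtains gz where "g (prox \<gamma> g x) = ereal gz"
    and "\<And>w. ereal (gz + inner ((1/\<gamma>) *\<^sub>R (x - prox \<gamma> g x)) (w - prox \<gamma> g x)) \<le> g w"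
proof -
  define h where "h w = (norm (x - w))^2 / (2*\<gamma>)" for w
  define \<phi> where "\<phi> w = g w + ereal (h w)" for w
  have h_expand: "h w = h z + inner ((1/\<gamma>) *\<^sub>R (z - x)) (w - z) + 1/(2*\<gamma>) * (norm (w - z))^2"
    for z w
    using \<open>0 < \<gamma>\<close> unfolding h_def power2_norm_eq_inner
    by (simp add: inner_diff_left inner_diff_right inner_commute field_simps)
  have "\<exists>z. \<forall>w. \<phi> z \<le> \<phi> w"
  proof (rule ereal_lsc_uniformly_convex_has_minimizer)
    show "ereal_lsc \<phi>"
      unfolding \<phi>_def[abs_def] h_def
      using \<open>0 < \<gamma>\<close> by (intro ereal_lsc_add_continuous[OF lsc] continuous_intros) simp
    show "ereal (c + inner p x - \<gamma>/2 * (norm p)^2) \<le> \<phi> w" for w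
    proof -
      have "0 \<le> (norm (x - w - \<gamma> *\<^sub>R p))^2 / (2*\<gamma>)"
        using \<open>0 < \<gamma>\<close> by simp
      also have "\<dots> = h w - inner p (x - w) + \<gamma>/2 * (norm p)^2"
        using \<open>0 < \<gamma>\<close> unfolding h_def power2_norm_eq_inner
        by (simp add: inner_add_left inner_add_right inner_diff_left inner_diff_right inner_commute field_simps)
      finally have "ereal (c + inner p x - \<gamma>/2 * (norm p)^2) \<le> ereal (c + inner p w) + ereal (h w)"
        by (simp add: inner_diff_right)
      also have "\<dots> \<le> \<phi> w"
        unfolding \<phi>_def by (intro add_right_mono minorant)
      finally show ?thesis .
    qed
    show "\<phi> w\<^sub>0 \<noteq> \<infinity>"
      using dom by (simp add: \<phi>_def)
    show "\<phi> (midpoint a b) \<le> ereal ((\<alpha> + \<beta>)/2 - 1/(8*\<gamma>) * (norm (a - b))^2)"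
      if "\<phi> a = ereal \<alpha>" "\<phi> b = ereal \<beta>" for a b \<alpha> \<beta>
    proof -
      have "g a = ereal (\<alpha> - h a)" "g b = ereal (\<beta> - h b)"
        using that by (cases "g a"; cases "g b"; simp add: \<phi>_def)+
      from ereal_convex_le_combination[OF conv this, of "1/2"]
      have "g (midpoint a b) \<le> ereal ((\<alpha> - h a)/2 + (\<beta> - h b)/2)"
        by (simp add: midpoint_def scaleR_add_right)
      moreover have "h (midpoint a b) = h a/2 + h b/2 - 1/(8*\<gamma>) * (norm (a - b))^2"
        using \<open>0 < \<gamma>\<close> unfolding h_def midpoint_def power2_norm_eq_inner
        by (simp add: inner_add_left inner_add_right inner_diff_left inner_diff_right inner_commute field_simps)
      ultimately show ?thesis
        unfolding \<phi>_def by (simp add: add_right_mono[THEN order_trans] field_simps)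
    qed
  qed (use \<open>0 < \<gamma>\<close> in simp)
  then have min: "\<forall>w. \<phi> (prox \<gamma> g x) \<le> \<phi> w"
    unfolding prox_def \<phi>_def h_def by (rule someI_ex)
  define z where "z = prox \<gamma> g x"
  have "g z \<noteq> \<infinity>"
    using min dom by (auto simp: z_def \<phi>_def dest!: spec[of _ w\<^sub>0])
  moreover have "g z \<noteq> -\<infinity>"
    using minorant[of z] by auto
  ultimately obtain gz where gz: "g z = ereal gz"
    by (cases "g z") auto
  have "ereal (gz - inner ((1/\<gamma>) *\<^sub>R (z - x)) (w - z)) \<le> g w" for w
  proof (rule composite_minimizer_subgradient[OF conv _ gz])
    show "ereal (h z) + g z \<le> ereal (h w) + g w" for w
      using min by (simp add: z_def \<phi>_def add.commute)
  qed (rule h_expand[THEN order_eq_refl])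
  then show ?thesis
    by (intro that[OF gz[unfolded z_def]]) (simp add: z_def inner_diff_left[symmetric] algebra_simps)
qed
section \<open>The Prox-ITEM parameters\<close>

declare itemA.simps(2)[simp del]

lemma itemA_nonneg:
  assumes "0 < q" "q < 1"
  shows "0 \<le> itemA q k"
proof (induction k)
  case (Suc k)
  then show ?case
    using assms by (simp add: itemA.simps(2))
qed simp

lemma itemA_less_Suc:
  assumes "0 < q" "q < 1"
  shows "itemA q k < itemA q (Suc k)"
proof -
  define A where "A = itemA q k"
  define S where "S = sqrt ((1 + A) * (1 + q * A))"
  define N where "N = (1 + q) * A + 2 * (1 + S)"
  have "0 \<le> A"
    using itemA_nonneg[OF assms] by (simp add: A_def)
  moreover have "0 \<le> q * A" "0 \<le> S"
    using \<open>0 \<le> A\<close> assms by (simp_all add: S_def)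
  ultimately have "A < N"
    by (simp add: N_def algebra_simps)
  also have "N \<le> N / (1 - q)^2"
    using assms \<open>A < N\<close> \<open>0 \<le> A\<close>
    by (simp add: le_divide_eq power_le_one mult_le_cancel_left1)
  finally show ?thesis
    by (simp add: A_def N_def S_def itemA.simps(2))
qed

lemma itemA_Suc_pos:
  assumes "0 < q" "q < 1"
  shows "0 < itemA q (Suc k)"
  using itemA_nonneg[OF assms, of k] itemA_less_Suc[OF assms, of k] by linarith

lemma itemA_Suc_implicit:
  assumes "0 < q" "q < 1"
  shows "(1 + q) * itemA q (Suc k) - itemA q k = 2 * sqrt (itemA q (Suc k) * (1 + q * itemA q (Suc k)))"
proof -
  define A where "A = itemA q k"
  define B where "B = itemA q (Suc k)"
  define S where "S = sqrt ((1 + A) * (1 + q * A))"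
  have "0 \<le> A" "A < B"
    using itemA_nonneg[OF assms] itemA_less_Suc[OF assms] by (auto simp: A_def B_def)
  have "(1 - q)^2 * B = (1 + q) * A + 2 + 2 * S"
    using assms by (simp add: A_def B_def S_def itemA.simps(2))
  moreover have "(1 - q)^2 * (((1 + q) * B - A)^2 - 4 * (B * (1 + q * B)))
      = ((1 - q)^2 * B - (1 + q) * A - 2)^2 - 4 * ((1 + A) * (1 + q * A))"
    by algebra
  moreover have "S^2 = (1 + A) * (1 + q * A)"
    using \<open>0 \<le> A\<close> assms by (simp add: S_def)
  ultimately have "(1 - q)^2 * (((1 + q) * B - A)^2 - 4 * (B * (1 + q * B))) = 0"
    by (simp add: power_mult_distrib)
  then have "((1 + q) * B - A)^2 = (2 * sqrt (B * (1 + q * B)))^2"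
    using assms \<open>A < B\<close> \<open>0 \<le> A\<close> by (simp add: power_mult_distrib)
  moreover have "0 \<le> (1 + q) * B - A" "0 \<le> 2 * sqrt (B * (1 + q * B))"
    using assms \<open>A < B\<close> \<open>0 \<le> A\<close> by (simp_all add: distrib_right add_increasing2)
  ultimately show ?thesis
    unfolding A_def B_def by (simp only: power2_eq_iff_nonneg)
qed

lemma itemDelta_pos:
  assumes "0 < q" "q < 1"
  shows "0 < itemDelta q k"
  using itemA_Suc_pos[OF assms, of k] assms by (simp add: itemDelta_def add_pos_pos)

lemma itemDelta_sq:
  assumes "0 < q" "q < 1"
  shows "(itemDelta q k)^2 * (1 + q * itemA q (Suc k)) = itemA q (Suc k)"
proof -
  have "0 < itemA q (Suc k)" "0 < 1 + q * itemA q (Suc k)"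
    using itemA_Suc_pos[OF assms, of k] assms by (simp_all add: add_pos_pos)
  then show ?thesis
    by (simp add: itemDelta_def)
qed

lemma itemDelta_implicit:
  assumes "0 < q" "q < 1"
  shows "2 * itemDelta q k * (1 + q * itemA q (Suc k)) = (1 + q) * itemA q (Suc k) - itemA q k"
proof -
  define B where "B = itemA q (Suc k)"
  define \<delta> where "\<delta> = itemDelta q k"
  have "0 < B" "0 < \<delta>"
    using itemA_Suc_pos[OF assms] itemDelta_pos[OF assms] by (auto simp: B_def \<delta>_def)
  have "(\<delta> * (1 + q * B))^2 = \<delta>^2 * (1 + q * B) * (1 + q * B)"
    by (simp add: power2_eq_square)
  also have "\<dots> = B * (1 + q * B)"
    using itemDelta_sq[OF assms, of k] by (simp add: B_def \<delta>_def)
  finally have "sqrt (B * (1 + q * B)) = \<delta> * (1 + q * B)"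
    using \<open>0 < B\<close> \<open>0 < \<delta>\<close> assms by (intro real_sqrt_unique) auto
  then show ?thesis
    using itemA_Suc_implicit[OF assms, of k] by (simp add: B_def \<delta>_def)
qed

lemma itemBeta_implicit:
  assumes "0 < q" "q < 1"
  shows "itemBeta q k * (1 - q) * itemA q (Suc k) = itemA q k"
  using itemA_Suc_pos[OF assms, of k] assms by (simp add: itemBeta_def)

lemma itemDelta_mult_ge:
  assumes "0 < q" "q < 1"
  shows "q * itemA q (Suc k) \<le> itemDelta q k * (1 + q * itemA q (Suc k))"
proof -
  define B where "B = itemA q (Suc k)"
  define \<delta> where "\<delta> = itemDelta q k"
  have "0 < B" "0 < \<delta>"
    using itemA_Suc_pos[OF assms] itemDelta_pos[OF assms] by (auto simp: B_def \<delta>_def)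
  have "(q * B)^2 = q * (q * B^2)"
    by (simp add: power2_eq_square)
  also have "\<dots> \<le> q * B^2"
    using assms by (intro mult_left_le_one_le) auto
  also have "\<dots> \<le> \<delta>^2 * (1 + q * B) * (1 + q * B)"
    unfolding itemDelta_sq[OF assms, of k, folded B_def \<delta>_def]
    using \<open>0 < B\<close> by (simp add: power2_eq_square distrib_left)
  also have "\<dots> = (\<delta> * (1 + q * B))^2"
    by (simp add: power2_eq_square)
  finally have "(q * B)^2 \<le> (\<delta> * (1 + q * B))^2" .
  moreover have "0 \<le> \<delta> * (1 + q * B)"
    using \<open>0 < \<delta>\<close> \<open>0 < B\<close> assms by (intro mult_nonneg_nonneg add_nonneg_nonneg) auto
  ultimately show ?thesis
    unfolding B_def \<delta>_def by (rule power2_le_imp_le)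
qed

lemma itemA_div_itemDelta_le:
  assumes "0 < q" "q < 1"
  shows "itemA q k / itemDelta q k \<le> itemDelta q k * (1 + q * itemA q (Suc k))"
proof -
  have "0 < itemDelta q k"
    by (rule itemDelta_pos[OF assms])
  then have "itemA q k / itemDelta q k \<le> itemA q (Suc k) / itemDelta q k"
    using itemA_less_Suc[OF assms, of k] by (simp add: divide_right_mono)
  also have "\<dots> = itemDelta q k * (1 + q * itemA q (Suc k))"
    using itemDelta_sq[OF assms, of k] \<open>0 < itemDelta q k\<close> by (simp add: field_simps power2_eq_square)
  finally show ?thesis .
qed

text \<open>The coefficients a_k of <v_k, z_k - x*> and b_k of G z_k in the Lyapunov function.\<close>

definition itemInnerWeight :: "real \<Rightarrow> nat \<Rightarrow> real" where
  "itemInnerWeight q k = (case k of 0 \<Rightarrow> 0 | Suc j \<Rightarrow> (1 + q) * itemA q (Suc j) - itemA q j)"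

definition itemGWeight :: "real \<Rightarrow> nat \<Rightarrow> real" where
  "itemGWeight q k = (case k of 0 \<Rightarrow> 0 | Suc j \<Rightarrow> itemA q j / itemDelta q j)"

lemma itemWeight_bounds:
  assumes "0 < q" "q < 1"
  shows "q * itemA q k \<le> itemInnerWeight q k"
    and "itemGWeight q k \<le> itemInnerWeight q k - q * itemA q k + itemA q k / itemDelta q k"
    and "0 \<le> itemGWeight q k" and "itemGWeight q k \<le> itemInnerWeight q k"
proof -
  have "q * itemA q k \<le> itemInnerWeight q k \<and>
      itemGWeight q k \<le> itemInnerWeight q k - q * itemA q k + itemA q k / itemDelta q k \<and>
      0 \<le> itemGWeight q k \<and> itemGWeight q k \<le> itemInnerWeight q k"
  proof (cases k)
    case (Suc j)
    have "itemInnerWeight q k = 2 * (itemDelta q j * (1 + q * itemA q k))"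
      using itemDelta_implicit[OF assms, of j] by (simp add: itemInnerWeight_def Suc)
    moreover have "0 \<le> itemA q k / itemDelta q k" "0 \<le> itemGWeight q k"
      using itemA_nonneg[OF assms, of k] itemDelta_pos[OF assms, of k]
        itemA_nonneg[OF assms, of j] itemDelta_pos[OF assms, of j]
      by (simp_all add: itemGWeight_def Suc)
    ultimately show ?thesis
      using itemDelta_mult_ge[OF assms, of j] itemA_div_itemDelta_le[OF assms, of j]
      by (simp add: itemGWeight_def Suc)
  qed (simp add: itemInnerWeight_def itemGWeight_def)
  then show "q * itemA q k \<le> itemInnerWeight q k"
    and "itemGWeight q k \<le> itemInnerWeight q k - q * itemA q k + itemA q k / itemDelta q k"
    and "0 \<le> itemGWeight q k" and "itemGWeight q k \<le> itemInnerWeight q k"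
    by auto
qed

section \<open>The Lyapunov function\<close>

text \<open>With the notation of the header: z = z_k - x*, y = y_(k-1) - x*, s = grad F y_(k-1), v = v_k,
  fy = F y_(k-1) and gz = G z_k.\<close>

definition item_potential ::
    "real \<Rightarrow> real \<Rightarrow> real \<Rightarrow> real \<Rightarrow> 'a::real_inner \<Rightarrow> 'a \<Rightarrow> 'a \<Rightarrow> 'a \<Rightarrow> real \<Rightarrow> real \<Rightarrow> real"
  where
  "item_potential q A a b z y s v fy gz =
     (1 + q * A) * (norm z)^2 + (1 - q) * A * interpolation_gap q 1 (y, fy, s) (0, 0, 0)
     + a * inner v z - b * gz + A/2 * (norm v)^2"

lemma item_potential_identity:
  fixes z ym sm v s vp y zp :: "'a::real_inner"
  assumes "q \<noteq> 1" "d \<noteq> 0"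
    and "d^2 * (1 + q * B) = B" "2 * d * (1 + q * B) = (1 + q) * B - A" "\<beta> * (1 - q) * B = A"
    and y: "y = (1 - \<beta>) *\<^sub>R z + \<beta> *\<^sub>R (ym - sm - v)"
    and zp: "zp = (1 - q * d) *\<^sub>R z + (q * d) *\<^sub>R y - d *\<^sub>R (s + vp)"
  shows "item_potential q B ((1 + q) * B - A) (A/d) zp y s vp fy gzp
      + (1 - q) * (B - A) * interpolation_gap q 1 (0, 0, 0) (y, fy, s)
      + (1 - q) * A * interpolation_gap q 1 (ym, fm, sm) (y, fy, s)
      + A/d * (gzp - gz - inner v (zp - z))
      + A/2 * (norm (v - vp))^2 + (B - A)/2 * (norm vp)^2
    = item_potential q A (q * A) (A/d) z ym sm v fm gz"
proof -
  define r where "r = 1 / (2 * (1 - q))"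
  define b where "b = A / d"
  have gap: "interpolation_gap q 1 (a, fa, ga) (c, fc, gc)
      = fa - fc - inner gc (a - c) - q/2 * (norm (a - c))^2 - r * (norm (ga - gc - q *\<^sub>R (a - c)))^2"
    for a c ga gc :: 'a and fa fc
    by (simp add: r_def)
  txt \<open>Naming 1/(2(1 - q)), A/d and 1/2 makes the identity polynomial, so that \<open>algebra\<close> can
    check it modulo the relations between the parameters.\<close>
  define h :: real where "h = 1/2"
  have half: "x / 2 = h * x" for x :: real
    by (simp add: h_def)
  have rel: "2 * r * (1 - q) - 1 = 0" "b * d - A = 0" "2 * h - 1 = 0"
    using \<open>q \<noteq> 1\<close> \<open>d \<noteq> 0\<close> by (simp_all add: r_def b_def h_def)
  have rel': "d^2 * (1 + q * B) - B = 0" "2 * d * (1 + q * B) - (1 + q) * B + A = 0" "\<beta> * (1 - q) * B - A = 0"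
    using assms(3-5) by simp_all
  show ?thesis
    unfolding zp y item_potential_def gap b_def[symmetric] power2_norm_eq_inner half
    apply (simp add: inner_add_left inner_add_right inner_diff_left inner_diff_right)
    apply (simp add: inner_commute)
    using rel rel' by algebra
qed

lemma item_potential_step:
  fixes z ym sm v s vp y zp :: "'a::real_inner"
  assumes q: "0 < q" "q < 1" and AB: "0 \<le> A" "A \<le> B" and "0 < d"
    and rel: "d^2 * (1 + q * B) = B" "2 * d * (1 + q * B) = (1 + q) * B - A" "\<beta> * (1 - q) * B = A"
    and y: "y = (1 - \<beta>) *\<^sub>R z + \<beta> *\<^sub>R (ym - sm - v)"
    and zp: "zp = (1 - q * d) *\<^sub>R z + (q * d) *\<^sub>R y - d *\<^sub>R (s + vp)"
    and gap_opt: "0 \<le> interpolation_gap q 1 (0, 0, 0) (y, fy, s)"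
    and gap_prev: "0 \<le> interpolation_gap q 1 (ym, fm, sm) (y, fy, s)"
    and subgrad: "gz + inner v (zp - z) \<le> gzp" "0 \<le> gz" "gz \<le> inner v z"
    and weights: "q * A \<le> a" "b \<le> a - q * A + A/d"
  shows "item_potential q B ((1 + q) * B - A) (A/d) zp y s vp fy gzp \<le> item_potential q A a b z ym sm v fm gz"
proof -
  have "0 \<le> (1 - q) * (B - A) * interpolation_gap q 1 (0, 0, 0) (y, fy, s)
      + (1 - q) * A * interpolation_gap q 1 (ym, fm, sm) (y, fy, s)
      + A/d * (gzp - gz - inner v (zp - z))
      + A/2 * (norm (v - vp))^2 + (B - A)/2 * (norm vp)^2"
    using q AB \<open>0 < d\<close> gap_opt gap_prev subgrad(1) by (intro add_nonneg_nonneg mult_nonneg_nonneg) auto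
  then have "item_potential q B ((1 + q) * B - A) (A/d) zp y s vp fy gzp
      \<le> item_potential q A (q * A) (A/d) z ym sm v fm gz"
    using item_potential_identity[OF _ _ rel y zp, of fy gzp fm gz] q \<open>0 < d\<close> by simp
  also have "\<dots> \<le> item_potential q A a b z ym sm v fm gz"
  proof -
    have "0 \<le> (a - q * A) * (inner v z - gz) + (a - q * A + A/d - b) * gz"
      using subgrad(2,3) weights by (intro add_nonneg_nonneg mult_nonneg_nonneg) auto
    then show ?thesis
      by (simp add: item_potential_def algebra_simps)
  qed
  finally show ?thesis .
qed

lemma item_potential_lower_bound:
  fixes z y s v :: "'a::real_inner"
  assumes "0 < q" "q < 1" "0 \<le> A" and "0 \<le> interpolation_gap q 1 (y, fy, s) (0, 0, 0)"
    and "0 \<le> b" "b \<le> a" "0 \<le> gz" "gz \<le> inner v z"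
  shows "(1 + q * A) * (norm z)^2 \<le> item_potential q A a b z y s v fy gz"
proof -
  have "b * gz \<le> a * inner v z"
    using assms by (meson mult_mono order_trans)
  moreover have "0 \<le> (1 - q) * A * interpolation_gap q 1 (y, fy, s) (0, 0, 0)" "0 \<le> A/2 * (norm v)^2"
    using assms by simp_all
  ultimately show ?thesis
    unfolding item_potential_def by linarith
qed

section \<open>Convergence of Prox-ITEM\<close>

locale prox_item =
  fixes f :: "'a::{real_inner, complete_space} \<Rightarrow> real" and df :: "'a \<Rightarrow> 'a" and g :: "'a \<Rightarrow> ereal"
    and \<mu> L :: real and x0 xstar :: 'a
  assumes mu_pos: "0 < \<mu>" and mu_L: "\<mu> < L"
    and grad: "\<And>x. (f has_derivative (\<lambda>h. inner (df x) h)) (at x)"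
    and smooth: "L-lipschitz_on UNIV df"
    and strongly_convex: "convex_on UNIV (\<lambda>x. f x - \<mu> / 2 * (norm x)^2)"
    and g_convex: "ereal_convex g" and g_proper: "ereal_proper g" and g_lsc: "ereal_lsc g"
    and xstar_min: "\<And>y. ereal (f xstar) + g xstar \<le> ereal (f y) + g y"
begin

definition q :: real where
  "q = \<mu> / L"

lemma L_pos: "0 < L"
  using mu_pos mu_L by simp

lemma q_pos: "0 < q" and q_less_1: "q < 1"
  using mu_pos mu_L L_pos by (simp_all add: q_def)

definition X :: "nat \<Rightarrow> 'a" where
  "X k = fst (proxitem \<mu> L df g x0 k)"

definition Z :: "nat \<Rightarrow> 'a" where
  "Z k = snd (proxitem \<mu> L df g x0 k)"

definition Y :: "nat \<Rightarrow> 'a" where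
  "Y k = (1 - itemBeta q k) *\<^sub>R Z k + itemBeta q k *\<^sub>R X k"

definition Zbar :: "nat \<Rightarrow> 'a" where
  "Zbar k = (1 - q * itemDelta q k) *\<^sub>R Z k + (q * itemDelta q k) *\<^sub>R Y k
     - (itemDelta q k / L) *\<^sub>R df (Y k)"

lemma Z_0: "Z 0 = x0"
  by (simp add: Z_def)

lemma Z_Suc: "Z (Suc k) = prox (itemDelta q k / L) g (Zbar k)"
  by (simp add: Z_def X_def Y_def Zbar_def q_def Let_def split_def)

lemma X_Suc: "X (Suc k) = Y k - (1 / L) *\<^sub>R df (Y k) - (1 / itemDelta q k) *\<^sub>R (Zbar k - Z (Suc k))"
  by (simp add: Z_def X_def Y_def Zbar_def q_def Let_def split_def)

definition F :: "'a \<Rightarrow> real" where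
  "F w = (f w - f xstar - inner (df xstar) (w - xstar)) / L"

definition gradF :: "'a \<Rightarrow> 'a" where
  "gradF w = (1 / L) *\<^sub>R (df w - df xstar)"

text \<open>G is meaningful only on the domain of g, since real_of_ereal \<infinity> = 0.\<close>

definition G :: "'a \<Rightarrow> real" where
  "G w = (real_of_ereal (g w) - real_of_ereal (g xstar) + inner (df xstar) (w - xstar)) / L"

lemma F_interpolation: "0 \<le> interpolation_gap q 1 (a - xstar, F a, gradF a) (b - xstar, F b, gradF b)"
proof -
  define u where "u = df a - df b - \<mu> *\<^sub>R (a - b)"
  have "gradF a - gradF b - q *\<^sub>R ((a - xstar) - (b - xstar)) = (1 / L) *\<^sub>R u"
    by (simp add: gradF_def u_def q_def algebra_simps)
  then have "(norm (gradF a - gradF b - q *\<^sub>R ((a - xstar) - (b - xstar))))^2 / (2 * (1 - q))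
      = (norm u)^2 / (2 * (L - \<mu>)) / L"
    using L_pos mu_L by (simp add: q_def field_simps power2_eq_square)
  moreover have "F a - F b - inner (gradF b) ((a - xstar) - (b - xstar)) = (f a - f b - inner (df b) (a - b)) / L"
    using L_pos by (simp add: F_def gradF_def inner_diff_left inner_diff_right field_simps)
  ultimately have "interpolation_gap q 1 (a - xstar, F a, gradF a) (b - xstar, F b, gradF b)
      = interpolation_gap \<mu> L (a, f a, df a) (b, f b, df b) / L"
    by (simp add: u_def q_def diff_divide_distrib)
  then show ?thesis
    using interpolation_gap_nonneg[OF grad smooth strongly_convex mu_L] L_pos by simp
qed

lemma g_xstar: "g xstar = ereal (real_of_ereal (g xstar))"
proof -
  obtain y where "g y \<noteq> \<infinity>" and "\<And>x. g x \<noteq> -\<infinity>"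
    using g_proper by (auto simp: ereal_proper_def)
  with xstar_min[of y] show ?thesis
    by (cases "g xstar"; cases "g y") auto
qed

lemma xstar_subgradient: "ereal (real_of_ereal (g xstar) - inner (df xstar) (w - xstar)) \<le> g w"
  by (rule composite_minimizer_subgradient[OF g_convex xstar_min g_xstar, where K = "L/2"])
    (rule lipschitz_gradient_quadratic_bounds(1)[OF grad smooth])

lemma g_xstar_finite: "g xstar \<noteq> \<infinity>"
  by (subst g_xstar) simp

lemma G_nonneg: "g w \<noteq> \<infinity> \<Longrightarrow> 0 \<le> G w"
  using xstar_subgradient[of w] L_pos by (cases "g w") (auto simp: G_def)

text \<open>V k is the subgradient of G at Z k delivered by the k-th proximal step.  Since z_0 = x0 need
  not lie in the domain of g, the start carries the dummy values V 0 = 0 and GZ 0 = 0; the value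
  Yprev 0 is irrelevant because its terms in the Lyapunov function carry the factor A_0 = 0.\<close>

definition V :: "nat \<Rightarrow> 'a" where
  "V k = (case k of 0 \<Rightarrow> 0 | Suc j \<Rightarrow> Y j - gradF (Y j) - X (Suc j))"

definition GZ :: "nat \<Rightarrow> real" where
  "GZ k = (case k of 0 \<Rightarrow> 0 | Suc j \<Rightarrow> G (Z (Suc j)))"

definition Yprev :: "nat \<Rightarrow> 'a" where
  "Yprev k = (case k of 0 \<Rightarrow> x0 | Suc j \<Rightarrow> Y j)"

lemma V_Suc: "V (Suc k) = (1 / L) *\<^sub>R df xstar + (1 / itemDelta q k) *\<^sub>R (Zbar k - Z (Suc k))"
  by (simp add: V_def X_Suc gradF_def algebra_simps)

lemma prox_step:
  obtains gz where "g (Z (Suc k)) = ereal gz"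
    and "\<And>w. ereal (gz + inner ((L / itemDelta q k) *\<^sub>R (Zbar k - Z (Suc k))) (w - Z (Suc k))) \<le> g w"
proof -
  have minorant: "ereal (real_of_ereal (g xstar) + inner (df xstar) xstar + inner (- df xstar) w) \<le> g w" for w
  proof -
    have "real_of_ereal (g xstar) + inner (df xstar) xstar + inner (- df xstar) w
        = real_of_ereal (g xstar) - inner (df xstar) (w - xstar)"
      by (simp add: inner_diff_right)
    then show ?thesis
      using xstar_subgradient[of w] by (simp only:)
  qed
  have "0 < itemDelta q k / L"
    using itemDelta_pos[OF q_pos q_less_1] L_pos by simp
  from prox_subgradient[OF g_convex g_lsc g_xstar_finite minorant this]
  obtain gz where "g (Z (Suc k)) = ereal gz"
    and "\<And>w. ereal (gz + inner ((1 / (itemDelta q k / L)) *\<^sub>R (Zbar k - Z (Suc k))) (w - Z (Suc k))) \<le> g w"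
    unfolding Z_Suc by blast
  with that show ?thesis
    by simp
qed

lemma Z_Suc_finite: "g (Z (Suc k)) \<noteq> \<infinity>"
proof -
  obtain gz where "g (Z (Suc k)) = ereal gz"
    using prox_step by blast
  then show ?thesis by simp
qed

lemma V_Suc_subgradient:
  assumes "g w \<noteq> \<infinity>"
  shows "G (Z (Suc k)) + inner (V (Suc k)) (w - Z (Suc k)) \<le> G w"
proof -
  obtain gz where gz: "g (Z (Suc k)) = ereal gz"
    and sub: "ereal (gz + inner ((L / itemDelta q k) *\<^sub>R (Zbar k - Z (Suc k))) (w - Z (Suc k))) \<le> g w"
    using prox_step by metis
  obtain gw where gw: "g w = ereal gw"
    using assms g_proper by (cases "g w") (auto simp: ereal_proper_def)
  have "L * inner (V (Suc k)) (w - Z (Suc k))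
      = inner (df xstar) (w - Z (Suc k)) + inner ((L / itemDelta q k) *\<^sub>R (Zbar k - Z (Suc k))) (w - Z (Suc k))"
    using L_pos by (simp add: V_Suc inner_add_left distrib_left)
  moreover have "L * G v = real_of_ereal (g v) - real_of_ereal (g xstar) + inner (df xstar) (v - xstar)" for v
    using L_pos by (simp add: G_def)
  moreover have "inner (df xstar) (w - Z (Suc k)) + inner (df xstar) (Z (Suc k) - xstar) = inner (df xstar) (w - xstar)"
    by (simp add: inner_diff_right)
  ultimately have "L * (G (Z (Suc k)) + inner (V (Suc k)) (w - Z (Suc k))) \<le> L * G w"
    using sub gz gw by (simp add: distrib_left)
  then show ?thesis
    using L_pos by simp
qed

lemma G_xstar: "G xstar = 0"
  by (simp add: G_def)

lemma GZ_nonneg: "0 \<le> GZ k"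
  using G_nonneg[OF Z_Suc_finite] by (cases k) (simp_all add: GZ_def)

lemma GZ_le_inner: "GZ k \<le> inner (V k) (Z k - xstar)"
proof (cases k)
  case (Suc j)
  from V_Suc_subgradient[OF g_xstar_finite, of j] show ?thesis
    by (simp add: Suc GZ_def G_xstar inner_diff_right)
qed (simp add: GZ_def V_def)

lemma GZ_Suc_ge: "GZ k + inner (V k) (Z (Suc k) - Z k) \<le> GZ (Suc k)"
proof (cases k)
  case 0
  then show ?thesis
    using G_nonneg[OF Z_Suc_finite] by (simp add: GZ_def V_def)
qed (simp add: GZ_def V_Suc_subgradient[OF Z_Suc_finite])

lemma Y_eq:
  "Y k - xstar = (1 - itemBeta q k) *\<^sub>R (Z k - xstar)
     + itemBeta q k *\<^sub>R ((Yprev k - xstar) - gradF (Yprev k) - V k)"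
proof (cases k)
  case 0
  then show ?thesis by (simp add: Y_def itemBeta_def)
next
  case (Suc j)
  then have "(Yprev k - xstar) - gradF (Yprev k) - V k = X k - xstar"
    by (simp add: Yprev_def V_def)
  moreover have "Y k - xstar = (1 - itemBeta q k) *\<^sub>R (Z k - xstar) + itemBeta q k *\<^sub>R (X k - xstar)"
    by (simp add: Y_def algebra_simps)
  ultimately show ?thesis
    by simp
qed

lemma Z_Suc_eq:
  "Z (Suc k) - xstar = (1 - q * itemDelta q k) *\<^sub>R (Z k - xstar) + (q * itemDelta q k) *\<^sub>R (Y k - xstar)
     - itemDelta q k *\<^sub>R (gradF (Y k) + V (Suc k))"
proof -
  have "itemDelta q k *\<^sub>R V (Suc k) = (itemDelta q k / L) *\<^sub>R df xstar + (Zbar k - Z (Suc k))"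
    using itemDelta_pos[OF q_pos q_less_1, of k] by (simp add: V_Suc scaleR_add_right)
  then show ?thesis
    by (simp add: Zbar_def gradF_def algebra_simps)
qed

definition potential :: "nat \<Rightarrow> real" where
  "potential k = item_potential q (itemA q k) (itemInnerWeight q k) (itemGWeight q k)
     (Z k - xstar) (Yprev k - xstar) (gradF (Yprev k)) (V k) (F (Yprev k)) (GZ k)"

lemma potential_Suc_le: "potential (Suc k) \<le> potential k"
proof -
  define A where "A = itemA q k"
  define B where "B = itemA q (Suc k)"
  define d where "d = itemDelta q k"
  have "item_potential q B ((1 + q) * B - A) (A / d) (Z (Suc k) - xstar) (Y k - xstar) (gradF (Y k))
      (V (Suc k)) (F (Y k)) (GZ (Suc k)) \<le> potential k"
    unfolding potential_def A_def[symmetric]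
  proof (rule item_potential_step[OF q_pos q_less_1])
    show "0 \<le> A" "A \<le> B" "0 < d"
      using itemA_nonneg itemA_less_Suc itemDelta_pos q_pos q_less_1
      by (auto simp: A_def B_def d_def less_imp_le)
    show "d^2 * (1 + q * B) = B" "2 * d * (1 + q * B) = (1 + q) * B - A"
      "itemBeta q k * (1 - q) * B = A"
      using itemDelta_sq itemDelta_implicit itemBeta_implicit q_pos q_less_1
      by (auto simp: A_def B_def d_def)
    show "0 \<le> interpolation_gap q 1 (0, 0, 0) (Y k - xstar, F (Y k), gradF (Y k))"
      using F_interpolation[of xstar "Y k"] by (simp add: F_def gradF_def)
    show "0 \<le> interpolation_gap q 1 (Yprev k - xstar, F (Yprev k), gradF (Yprev k)) (Y k - xstar, F (Y k), gradF (Y k))"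
      by (rule F_interpolation)
    show "q * A \<le> itemInnerWeight q k"
      "itemGWeight q k \<le> itemInnerWeight q k - q * A + A / d"
      using itemWeight_bounds[OF q_pos q_less_1] by (auto simp: A_def d_def)
    show "GZ k + inner (V k) ((Z (Suc k) - xstar) - (Z k - xstar)) \<le> GZ (Suc k)"
      using GZ_Suc_ge by simp
  qed (simp_all add: Y_eq Z_Suc_eq GZ_nonneg GZ_le_inner A_def d_def)
  then show ?thesis
    by (simp add: potential_def Yprev_def itemInnerWeight_def itemGWeight_def A_def B_def d_def)
qed

lemma potential_0: "potential 0 = (norm (x0 - xstar))^2"
  by (simp add: potential_def itemInnerWeight_def itemGWeight_def V_def GZ_def Z_0 item_potential_def)

lemma potential_lower_bound: "(1 + q * itemA q k) * (norm (Z k - xstar))^2 \<le> potential k"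
  unfolding potential_def
proof (rule item_potential_lower_bound[OF q_pos q_less_1 itemA_nonneg[OF q_pos q_less_1]])
  show "0 \<le> interpolation_gap q 1 (Yprev k - xstar, F (Yprev k), gradF (Yprev k)) (0, 0, 0)"
    using F_interpolation[of "Yprev k" xstar] by (simp add: F_def gradF_def)
qed (use itemWeight_bounds[OF q_pos q_less_1] GZ_nonneg GZ_le_inner in auto)

lemma Z_dist_bound: "(norm (Z k - xstar))^2 \<le> 1 / (1 + q * itemA q k) * (norm (x0 - xstar))^2"
proof -
  have "0 \<le> q * itemA q k"
    using q_pos itemA_nonneg[OF q_pos q_less_1] by simp
  then have "0 < 1 + q * itemA q k"
    by linarith
  moreover have "potential k \<le> potential 0"
    by (rule lift_Suc_antimono_le[of potential, OF potential_Suc_le]) simp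
  ultimately show ?thesis
    using potential_lower_bound[of k] by (simp add: potential_0 field_simps)
qed

end

theorem theorem1:
  fixes f :: "'a::{real_inner, complete_space} \<Rightarrow> real"
    and df :: "'a \<Rightarrow> 'a"
    and g :: "'a \<Rightarrow> ereal"
    and \<mu> L :: real
    and x0 xstar :: 'a
  assumes mu_pos: "0 < \<mu>" and mu_L: "\<mu> < L"
    and grad: "\<And>x. (f has_derivative (\<lambda>h. inner (df x) h)) (at x)"
    and smooth: "L-lipschitz_on UNIV df"
    and strongly_convex: "convex_on UNIV (\<lambda>x. f x - \<mu> / 2 * (norm x)^2)"
    and g_convex: "ereal_convex g" and g_proper: "ereal_proper g" and g_lsc: "ereal_lsc g"
    and xstar_min: "\<And>y. ereal (f xstar) + g xstar \<le> ereal (f y) + g y"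
  shows "\<forall>k. (norm (snd (proxitem \<mu> L df g x0 k) - xstar))^2
              \<le> 1 / (1 + (\<mu> / L) * itemA (\<mu> / L) k) * (norm (x0 - xstar))^2"
proof -
  interpret prox_item f df g \<mu> L x0 xstar
    using assms by unfold_locales
  show ?thesis
    using Z_dist_bound by (simp add: Z_def q_def)
qed

end
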